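(* Let $\mathcal{K}\subset L^2(G)$ be a reproducing kernel Hilbert space, let $\Lambda$ be a relatively separated family in $G$, and let $(g_\lambda)_{\lambda\in\Lambda}$ be a system of $w$-molecules in $\mathcal{K}$ for some admissible weight $w$. Then $(g_\lambda)_{\lambda\in\Lambda}$ is a Bessel sequence in $\mathcal{K}$, i.e. there is $B>0$ with $\sum_{\lambda}|\langle f,g_\lambda\rangle|^2\le B\|f\|^2$ for all $f\in\mathcal{K}$.
   Context: $G$ is a $\sigma$-compact locally compact group with left Haar measure $\mu_G$; $Q$ a fixed symmetric open relatively compact neighborhood of $e$. $M_Qf(x)=\operatorname{ess\,sup}_{y\in xQ}|f(y)|$, $M_Q^Rf(x)=\operatorname{ess\,sup}_{y\in Qx}|f(y)|$. Admissible weight: measurable submultiplicative $w:G\to[1,\infty)$. $\mathcal{W}_w(G)=\{f\in C(G): w\cdot M_Q^RM_Qf\in L^1(G)\}$. RKHS: closed separable subspace of $L^2(G)$ with bounded point evaluations. A family $\Lambda$ is relatively separated if $\sup_x\#(\Lambda\cap xQ)<\infty$. A system of $w$-molecules is a family $(g_\lambda)_{\lambda\in\Lambda}$ in $\mathcal{K}$ with $|g_\lambda(x)|\le\min\{\Phi(\lambda^{-1}x),\Phi(x^{-1}\lambda)\}$ for all $x,\lambda$, for some non-negative $\Phi\in\mathcal{W}_w(G)$. *)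

theory Defs
  imports "HOL-Analysis.Analysis" "HOL-Probability.Essential_Supremum"
begin

text \<open>The group G is the type 'g, written additively (group_add is NOT assumed
  commutative): x + y is the group product xy, -x the inverse, 0 the identity.\<close>

definition sigma_compact :: "'a::topological_space set \<Rightarrow> bool" where
  "sigma_compact S \<longleftrightarrow> (\<exists>C::nat \<Rightarrow> 'a set. (\<forall>n. compact (C n)) \<and> (\<Union>n. C n) = S)"

definition left_haar_measure :: "'g::{topological_group_add,t2_space} measure \<Rightarrow> bool" where
  "left_haar_measure \<mu> \<longleftrightarrow>
     sets \<mu> = sets borel \<and> space \<mu> = UNIV \<and>
     (\<forall>x A. A \<in> sets borel \<longrightarrow> emeasure \<mu> ((+) x ` A) = emeasure \<mu> A) \<and>
     (\<forall>K. compact K \<longrightarrow> emeasure \<mu> K < \<infinity>) \<and>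
     (\<forall>U. open U \<and> U \<noteq> {} \<longrightarrow> emeasure \<mu> U > 0) \<and>
     (\<forall>A. A \<in> sets borel \<longrightarrow>
        emeasure \<mu> A = (INF U\<in>{U. open U \<and> A \<subseteq> U}. emeasure \<mu> U)) \<and>
     (\<forall>U. open U \<longrightarrow>
        emeasure \<mu> U = (SUP K\<in>{K. compact K \<and> K \<subseteq> U}. emeasure \<mu> K))"

definition lc_group_setting :: "'g::{topological_group_add,t2_space} measure \<Rightarrow> 'g set \<Rightarrow> bool" where
  "lc_group_setting \<mu> Q \<longleftrightarrow>
     locally compact (UNIV :: 'g set) \<and> sigma_compact (UNIV :: 'g set) \<and>
     left_haar_measure \<mu> \<and>
     open Q \<and> 0 \<in> Q \<and> uminus ` Q = Q \<and> compact (closure Q)"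

definition max_left :: "'g::group_add measure \<Rightarrow> 'g set \<Rightarrow> ('g \<Rightarrow> ennreal) \<Rightarrow> 'g \<Rightarrow> ennreal" where
  "max_left \<mu> Q F x = esssup \<mu> (\<lambda>y. if y \<in> (\<lambda>q. x + q) ` Q then F y else 0)"

definition max_right :: "'g::group_add measure \<Rightarrow> 'g set \<Rightarrow> ('g \<Rightarrow> ennreal) \<Rightarrow> 'g \<Rightarrow> ennreal" where
  "max_right \<mu> Q F x = esssup \<mu> (\<lambda>y. if y \<in> (\<lambda>q. q + x) ` Q then F y else 0)"

definition admissible_weight :: "('g::{topological_group_add,t2_space} \<Rightarrow> real) \<Rightarrow> bool" where
  "admissible_weight w \<longleftrightarrow> w \<in> borel_measurable borel \<and> (\<forall>x. w x \<ge> 1) \<and>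
     (\<forall>x y. w (x + y) \<le> w x * w y)"

definition wiener_amalgam ::
  "'g::{topological_group_add,t2_space} measure \<Rightarrow> 'g set \<Rightarrow> ('g \<Rightarrow> real) \<Rightarrow> ('g \<Rightarrow> 'b::real_normed_vector) \<Rightarrow> bool" where
  "wiener_amalgam \<mu> Q w f \<longleftrightarrow> continuous_on UNIV f \<and>
     (let h = (\<lambda>x. ennreal (w x) * max_right \<mu> Q (max_left \<mu> Q (\<lambda>y. ennreal (norm (f y)))) x)
      in h \<in> borel_measurable \<mu> \<and> (\<integral>\<^sup>+ x. h x \<partial>\<mu>) < \<infinity>)"

definition square_integrable :: "'g measure \<Rightarrow> ('g \<Rightarrow> complex) \<Rightarrow> bool" where
  "square_integrable \<mu> f \<longleftrightarrow> f \<in> borel_measurable \<mu> \<and> integrable \<mu> (\<lambda>x. (cmod (f x))\<^sup>2)"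

definition L2_inner :: "'g measure \<Rightarrow> ('g \<Rightarrow> complex) \<Rightarrow> ('g \<Rightarrow> complex) \<Rightarrow> complex" where
  "L2_inner \<mu> f g = (LINT x|\<mu>. f x * cnj (g x))"

definition L2_norm :: "'g measure \<Rightarrow> ('g \<Rightarrow> complex) \<Rightarrow> real" where
  "L2_norm \<mu> f = sqrt (LINT x|\<mu>. (cmod (f x))\<^sup>2)"

text \<open>Elements are represented by their (unique,
  because of bounded point evaluations) pointwise-defined representatives.\<close>
definition rkhs :: "'g measure \<Rightarrow> ('g \<Rightarrow> complex) set \<Rightarrow> bool" where
  "rkhs \<mu> K \<longleftrightarrow>
     (\<forall>f\<in>K. square_integrable \<mu> f) \<and>
     (\<lambda>x. 0) \<in> K \<and>
     (\<forall>f\<in>K. \<forall>g\<in>K. \<forall>c::complex. (\<lambda>x. f x + c * g x) \<in> K) \<and>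
     (\<forall>fs h. (\<forall>n. fs n \<in> K) \<and> square_integrable \<mu> h \<and>
         (\<lambda>n. L2_norm \<mu> (\<lambda>x. fs n x - h x)) \<longlonglongrightarrow> 0 \<longrightarrow>
         (\<exists>k\<in>K. AE x in \<mu>. k x = h x)) \<and>
     (\<exists>D\<subseteq>K. countable D \<and> (\<forall>f\<in>K. \<forall>\<epsilon>>0. \<exists>d\<in>D. L2_norm \<mu> (\<lambda>x. f x - d x) < \<epsilon>)) \<and>
     (\<forall>x. \<exists>C. \<forall>f\<in>K. cmod (f x) \<le> C * L2_norm \<mu> f)"

definition rel_separated :: "'g::group_add set \<Rightarrow> ('i \<Rightarrow> 'g) \<Rightarrow> bool" where
  "rel_separated Q lam \<longleftrightarrow>
     (\<exists>N::nat. \<forall>x. finite {i. lam i \<in> (\<lambda>q. x + q) ` Q} \<and> card {i. lam i \<in> (\<lambda>q. x + q) ` Q} \<le> N)"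

definition molecules ::
  "'g::{topological_group_add,t2_space} measure \<Rightarrow> 'g set \<Rightarrow> ('g \<Rightarrow> real) \<Rightarrow> ('g \<Rightarrow> complex) set
     \<Rightarrow> ('i \<Rightarrow> 'g) \<Rightarrow> ('i \<Rightarrow> 'g \<Rightarrow> complex) \<Rightarrow> bool" where
  "molecules \<mu> Q w K lam g \<longleftrightarrow> (\<forall>i. g i \<in> K) \<and>
     (\<exists>\<Phi>::'g \<Rightarrow> real. (\<forall>x. \<Phi> x \<ge> 0) \<and> wiener_amalgam \<mu> Q w \<Phi> \<and>
        (\<forall>i x. cmod (g i x) \<le> min (\<Phi> (- lam i + x)) (\<Phi> (- x + lam i))))"

end

theory Submission
  imports Defs
begin

text \<open>Schur's test. Let h = w (M_Q^R M_Q \<Phi>) be the integrand of the amalgam norm of the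
  envelope \<Phi>. As \<Phi> is continuous and Q is a symmetric open neighbourhood of the identity,
  \<Phi>(y) \<le> h(u) whenever u \<in> yQ. Hence every translate of \<Phi> has integral at most \<integral>h and,
  since at most N of the cells \<lambda>Q overlap, \<Sum>_\<lambda> \<Phi>(x^-1 \<lambda>) \<le> N \<integral>h / \<mu>(Q). Because
  |g_\<lambda>(x)|^2 \<le> \<Phi>(\<lambda>^-1 x) \<Phi>(x^-1 \<lambda>), the Cauchy-Schwarz inequality with these two weights
  gives \<Sum>_\<lambda> |\<langle>f, g_\<lambda>\<rangle>|^2 \<le> (\<integral>h) (N \<integral>h / \<mu>(Q)) ||f||^2.\<close>

lemma image_add_left_eq_vimage:
  fixes y :: "'g::group_add"
  shows "(+) y ` A = (+) (- y) -` A"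
proof (intro set_eqI iffI)
  fix x assume "x \<in> (+) (- y) -` A"
  then show "x \<in> (+) y ` A"
    using image_eqI[of x "(+) y" "- y + x"] by simp
qed auto

lemma image_add_right_eq_vimage:
  fixes y :: "'g::group_add"
  shows "(\<lambda>x. x + y) ` A = (\<lambda>x. x + - y) -` A"
proof (intro set_eqI iffI)
  fix x assume "x \<in> (\<lambda>x. x + - y) -` A"
  then show "x \<in> (\<lambda>x. x + y) ` A"
    using image_eqI[of x "\<lambda>x. x + y" "x + - y"] by simp
qed auto

lemma mem_image_add_left_sym:
  fixes u v :: "'g::group_add"
  assumes "uminus ` Q = Q"
  shows "u \<in> (+) v ` Q \<longleftrightarrow> v \<in> (+) u ` Q"
proof -
  have "- (- v + u) \<in> Q \<longleftrightarrow> - v + u \<in> Q"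
    using assms by (metis image_eqI minus_minus)
  then show ?thesis
    by (simp add: image_add_left_eq_vimage minus_add)
qed

lemma
  fixes y :: "'g::topological_group_add"
  assumes "open A"
  shows open_image_add_left: "open ((+) y ` A)"
    and open_image_add_right: "open ((\<lambda>x. x + y) ` A)"
  unfolding image_add_left_eq_vimage image_add_right_eq_vimage
  by (rule open_vimage[OF assms], intro continuous_intros)
    (rule open_vimage[OF assms], intro continuous_intros)

lemma
  assumes "left_haar_measure \<mu>"
  shows sets_left_haar: "sets \<mu> = sets borel"
    and space_left_haar: "space \<mu> = UNIV"
    and emeasure_left_haar_translate: "A \<in> sets borel \<Longrightarrow> emeasure \<mu> ((+) x ` A) = emeasure \<mu> A"
    and emeasure_left_haar_compact_finite: "compact C \<Longrightarrow> emeasure \<mu> C < \<infinity>"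
    and emeasure_left_haar_open_pos: "open U \<Longrightarrow> U \<noteq> {} \<Longrightarrow> 0 < emeasure \<mu> U"
proof -
  have "sets \<mu> = sets borel \<and> space \<mu> = UNIV \<and>
      (\<forall>x A. A \<in> sets borel \<longrightarrow> emeasure \<mu> ((+) x ` A) = emeasure \<mu> A) \<and>
      (\<forall>C. compact C \<longrightarrow> emeasure \<mu> C < \<infinity>) \<and>
      (\<forall>U. open U \<and> U \<noteq> {} \<longrightarrow> emeasure \<mu> U > 0)"
    using assms unfolding left_haar_measure_def by (elim conjE) (intro conjI; assumption)
  then show "sets \<mu> = sets borel" "space \<mu> = UNIV"
    "A \<in> sets borel \<Longrightarrow> emeasure \<mu> ((+) x ` A) = emeasure \<mu> A"
    "compact C \<Longrightarrow> emeasure \<mu> C < \<infinity>" "open U \<Longrightarrow> U \<noteq> {} \<Longrightarrow> 0 < emeasure \<mu> U"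
    by auto
qed

lemma
  assumes "left_haar_measure \<mu>"
  shows measurable_left_haar_source: "measurable \<mu> M = measurable borel M"
    and measurable_left_haar_target: "measurable M \<mu> = measurable M borel"
  by (rule measurable_cong_sets[OF sets_left_haar[OF assms] refl],
      rule measurable_cong_sets[OF refl sets_left_haar[OF assms]])

lemma nn_integral_left_haar_translate:
  fixes F :: "'g::{topological_group_add,t2_space} \<Rightarrow> ennreal"
  assumes haar: "left_haar_measure \<mu>" and F: "F \<in> borel_measurable \<mu>"
  shows "(\<integral>\<^sup>+x. F (a + x) \<partial>\<mu>) = (\<integral>\<^sup>+x. F x \<partial>\<mu>)"
proof -
  have meas: "(+) a \<in> measurable \<mu> \<mu>"
    unfolding measurable_left_haar_source[OF haar] measurable_left_haar_target[OF haar]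
    by (intro borel_measurable_continuous_onI continuous_intros)
  have "distr \<mu> \<mu> ((+) a) = \<mu>"
  proof (rule measure_eqI)
    fix A assume "A \<in> sets (distr \<mu> \<mu> ((+) a))"
    then have A: "A \<in> sets borel" by (simp add: sets_left_haar[OF haar])
    have "emeasure (distr \<mu> \<mu> ((+) a)) A = emeasure \<mu> ((+) a -` A)"
      using A meas by (simp add: emeasure_distr sets_left_haar[OF haar] space_left_haar[OF haar])
    also have "\<dots> = emeasure \<mu> ((+) (- a) ` A)"
      by (simp add: image_add_left_eq_vimage)
    also have "\<dots> = emeasure \<mu> A"
      using A by (rule emeasure_left_haar_translate[OF haar])
    finally show "emeasure (distr \<mu> \<mu> ((+) a)) A = emeasure \<mu> A" .
  qed simp
  then show ?thesis
    using nn_integral_distr[OF meas, of F] F by (simp add: measurable_distr_eq1)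
qed

lemma le_esssupI:
  fixes f :: "'a \<Rightarrow> 'b::{second_countable_topology, dense_linorder, linorder_topology, complete_linorder}"
  assumes "U \<in> sets M" "emeasure M U \<noteq> 0" "\<And>x. x \<in> U \<Longrightarrow> c \<le> f x"
  shows "c \<le> esssup M f"
proof (rule ccontr)
  assume "\<not> c \<le> esssup M f"
  with esssup_AE[of f M] have "AE x in M. x \<notin> U"
    by (auto elim!: eventually_mono dest: assms(3) order.trans)
  then have "U \<in> null_sets M"
    using AE_iff_null_sets[OF assms(1)] by simp
  with assms(2) show False
    by (simp add: null_setsD1)
qed

lemma norm_le_esssup_open:
  fixes f :: "'a::topological_space \<Rightarrow> 'b::real_normed_vector"
  assumes sets: "sets \<mu> = sets borel"
    and support: "\<And>V. open V \<Longrightarrow> V \<noteq> {} \<Longrightarrow> 0 < emeasure \<mu> V"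
    and f: "continuous_on UNIV f" and "open U" "y \<in> U"
  shows "ennreal (norm (f y)) \<le> esssup \<mu> (\<lambda>t. if t \<in> U then ennreal (norm (f t)) else 0)"
proof (rule dense_le)
  fix c assume c: "c < ennreal (norm (f y))"
  define V where "V = U \<inter> {t. c < ennreal (norm (f t))}"
  have "open {t. c < ennreal (norm (f t))}"
    by (intro open_Collect_less continuous_intros continuous_on_ennreal f)
  then have "open V"
    using \<open>open U\<close> by (auto simp: V_def)
  moreover have "y \<in> V"
    using \<open>y \<in> U\<close> c by (simp add: V_def)
  ultimately have "V \<in> sets \<mu>" "emeasure \<mu> V \<noteq> 0"
    using support[of V] sets by (metis borel_open empty_iff order_less_irrefl)+
  then show "c \<le> esssup \<mu> (\<lambda>t. if t \<in> U then ennreal (norm (f t)) else 0)"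
    by (rule le_esssupI) (auto simp: V_def)
qed

lemma norm_le_max_left:
  fixes f :: "'g::{topological_group_add,t2_space} \<Rightarrow> 'b::real_normed_vector"
  assumes haar: "left_haar_measure \<mu>" and "open Q" and "continuous_on UNIV f"
    and "y \<in> (+) v ` Q"
  shows "ennreal (norm (f y)) \<le> max_left \<mu> Q (\<lambda>t. ennreal (norm (f t))) v"
  unfolding max_left_def
  by (rule norm_le_esssup_open[OF sets_left_haar[OF haar] emeasure_left_haar_open_pos[OF haar]
        assms(3) open_image_add_left[OF assms(2)] assms(4)])

lemma norm_le_max_right_max_left:
  fixes f :: "'g::{topological_group_add,t2_space} \<Rightarrow> 'b::real_normed_vector"
  assumes haar: "left_haar_measure \<mu>" and Q: "open Q" "0 \<in> Q" "uminus ` Q = Q"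
    and f: "continuous_on UNIV f" and u: "u \<in> (+) y ` Q"
  shows "ennreal (norm (f y)) \<le> max_right \<mu> Q (max_left \<mu> Q (\<lambda>t. ennreal (norm (f t)))) u"
proof -
  \<comment> \<open>every v in this neighbourhood of u satisfies y \<in> vQ\<close>
  define V where "V = (\<lambda>q. q + u) ` Q \<inter> (+) y ` Q"
  have "open V"
    unfolding V_def using Q(1) by (intro open_Int open_image_add_left open_image_add_right)
  moreover have "u \<in> (\<lambda>q. q + u) ` Q"
    using Q(2) by (rule rev_image_eqI) simp
  with u have "u \<in> V"
    unfolding V_def by blast
  ultimately have "V \<in> sets \<mu>" "emeasure \<mu> V \<noteq> 0"
    using sets_left_haar[OF haar] emeasure_left_haar_open_pos[OF haar, of V]
    by (metis borel_open empty_iff order_less_irrefl)+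
  then show ?thesis
    unfolding max_right_def
  proof (rule le_esssupI)
    fix v assume v: "v \<in> V"
    then have "y \<in> (+) v ` Q"
      unfolding V_def using mem_image_add_left_sym[OF Q(3)] by blast
    with haar Q(1) f have "ennreal (norm (f y)) \<le> max_left \<mu> Q (\<lambda>t. ennreal (norm (f t))) v"
      by (rule norm_le_max_left)
    with v show "ennreal (norm (f y))
        \<le> (if v \<in> (\<lambda>q. q + u) ` Q then max_left \<mu> Q (\<lambda>t. ennreal (norm (f t))) v else 0)"
      by (simp add: V_def)
  qed
qed

definition amalgam_integrand ::
  "'g::{topological_group_add,t2_space} measure \<Rightarrow> 'g set \<Rightarrow> ('g \<Rightarrow> real) \<Rightarrow> ('g \<Rightarrow> 'b::real_normed_vector)
     \<Rightarrow> 'g \<Rightarrow> ennreal" where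
  "amalgam_integrand \<mu> Q w f x = ennreal (w x) * max_right \<mu> Q (max_left \<mu> Q (\<lambda>y. ennreal (norm (f y)))) x"

lemma wiener_amalgam_iff_integrand:
  "wiener_amalgam \<mu> Q w f \<longleftrightarrow> continuous_on UNIV f \<and>
     amalgam_integrand \<mu> Q w f \<in> borel_measurable \<mu> \<and> (\<integral>\<^sup>+x. amalgam_integrand \<mu> Q w f x \<partial>\<mu>) < \<infinity>"
  unfolding wiener_amalgam_def Let_def amalgam_integrand_def[abs_def] ..

lemma norm_le_amalgam_integrand:
  fixes f :: "'g::{topological_group_add,t2_space} \<Rightarrow> 'b::real_normed_vector"
  assumes "left_haar_measure \<mu>" "open Q" "0 \<in> Q" "uminus ` Q = Q"
    and w: "\<And>x. 1 \<le> w x" and "continuous_on UNIV f" and "u \<in> (+) y ` Q"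
  shows "ennreal (norm (f y)) \<le> amalgam_integrand \<mu> Q w f u"
proof -
  have "ennreal (norm (f y)) \<le> 1 * max_right \<mu> Q (max_left \<mu> Q (\<lambda>t. ennreal (norm (f t)))) u"
    using norm_le_max_right_max_left[OF assms(1-4,6-)] by simp
  also have "\<dots> \<le> amalgam_integrand \<mu> Q w f u"
    unfolding amalgam_integrand_def using w by (intro mult_right_mono) (simp_all add: ennreal_leI)
  finally show ?thesis .
qed

lemma nn_integral_translate_le:
  fixes \<phi> h :: "'g::{topological_group_add,t2_space} \<Rightarrow> ennreal"
  assumes haar: "left_haar_measure \<mu>" and h: "h \<in> borel_measurable \<mu>" and "\<And>x. \<phi> x \<le> h x"
  shows "(\<integral>\<^sup>+x. \<phi> (a + x) \<partial>\<mu>) \<le> (\<integral>\<^sup>+x. h x \<partial>\<mu>)"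
proof -
  have "(\<integral>\<^sup>+x. \<phi> (a + x) \<partial>\<mu>) \<le> (\<integral>\<^sup>+x. h (a + x) \<partial>\<mu>)"
    by (intro nn_integral_mono assms(3))
  also have "\<dots> = (\<integral>\<^sup>+x. h x \<partial>\<mu>)"
    by (rule nn_integral_left_haar_translate[OF haar h])
  finally show ?thesis .
qed

lemma sum_indicator_translates_le:
  fixes lam :: "'i \<Rightarrow> 'g::group_add"
  assumes sym: "uminus ` Q = Q" and fin: "finite {i. lam i \<in> (+) u ` Q}"
    and card: "card {i. lam i \<in> (+) u ` Q} \<le> N" and F: "finite F"
  shows "(\<Sum>i\<in>F. indicator ((+) (lam i) ` Q) u :: ennreal) \<le> of_nat N"
proof -
  have "(\<Sum>i\<in>F. indicator ((+) (lam i) ` Q) u :: ennreal) = of_nat (card {i\<in>F. u \<in> (+) (lam i) ` Q})"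
    using F by (simp add: indicator_def sum.If_cases Int_def)
  also have "card {i\<in>F. u \<in> (+) (lam i) ` Q} \<le> card {i. lam i \<in> (+) u ` Q}"
    using fin by (rule card_mono) (auto simp: mem_image_add_left_sym[OF sym])
  then have "of_nat (card {i\<in>F. u \<in> (+) (lam i) ` Q}) \<le> (of_nat N :: ennreal)"
    using card by (simp add: of_nat_le_iff)
  finally show ?thesis .
qed

lemma emeasure_mult_sum_le_nn_integral:
  fixes \<phi> h :: "'g::{topological_group_add,t2_space} \<Rightarrow> ennreal" and lam :: "'i \<Rightarrow> 'g"
  assumes haar: "left_haar_measure \<mu>" and Q: "open Q" "uminus ` Q = Q"
    and h: "h \<in> borel_measurable \<mu>" and dom: "\<And>y u. u \<in> (+) y ` Q \<Longrightarrow> \<phi> y \<le> h u"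
    and fin: "\<And>u. finite {i. lam i \<in> (+) u ` Q}" and card: "\<And>u. card {i. lam i \<in> (+) u ` Q} \<le> N"
    and F: "finite F"
  shows "emeasure \<mu> Q * (\<Sum>i\<in>F. \<phi> (lam i)) \<le> of_nat N * (\<integral>\<^sup>+u. h u \<partial>\<mu>)"
proof -
  define S where "S i = (+) (lam i) ` Q" for i
  have S: "S i \<in> sets \<mu>" for i
    unfolding S_def sets_left_haar[OF haar] using Q(1) by (simp add: open_image_add_left)
  have "emeasure \<mu> Q * \<phi> (lam i) = (\<integral>\<^sup>+u. \<phi> (lam i) * indicator (S i) u \<partial>\<mu>)" for i
    using S[of i] Q(1) unfolding S_def
    by (simp add: nn_integral_cmult_indicator emeasure_left_haar_translate[OF haar] mult.commute)
  also have "\<dots> i \<le> (\<integral>\<^sup>+u. h u * indicator (S i) u \<partial>\<mu>)" for i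
    by (intro nn_integral_mono) (simp add: S_def dom indicator_def)
  finally have "emeasure \<mu> Q * (\<Sum>i\<in>F. \<phi> (lam i)) \<le> (\<Sum>i\<in>F. \<integral>\<^sup>+u. h u * indicator (S i) u \<partial>\<mu>)"
    by (simp add: sum_distrib_left sum_mono)
  also have "\<dots> = (\<integral>\<^sup>+u. h u * (\<Sum>i\<in>F. indicator (S i) u) \<partial>\<mu>)"
    using h S by (simp add: nn_integral_sum sum_distrib_left)
  also have "\<dots> \<le> (\<integral>\<^sup>+u. h u * of_nat N \<partial>\<mu>)"
    unfolding S_def using sum_indicator_translates_le[OF Q(2) fin card F]
    by (intro nn_integral_mono mult_left_mono) simp_all
  also have "\<dots> = of_nat N * (\<integral>\<^sup>+u. h u \<partial>\<mu>)"
    using nn_integral_cmult[OF h, of "of_nat N"] by (simp add: mult.commute)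
  finally show ?thesis .
qed

lemma cmod_L2_inner_square_le:
  fixes f g :: "'a \<Rightarrow> complex" and A B :: "'a \<Rightarrow> real"
  assumes [measurable]: "f \<in> borel_measurable \<mu>" "A \<in> borel_measurable \<mu>" "B \<in> borel_measurable \<mu>"
    and A: "\<And>x. 0 \<le> A x" and B: "\<And>x. 0 \<le> B x"
    and g: "\<And>x. (cmod (g x))\<^sup>2 \<le> A x * B x"
  shows "ennreal ((cmod (L2_inner \<mu> f g))\<^sup>2)
    \<le> (\<integral>\<^sup>+x. ennreal ((cmod (f x))\<^sup>2 * B x) \<partial>\<mu>) * (\<integral>\<^sup>+x. ennreal (A x) \<partial>\<mu>)"
proof -
  define a where "a x = ennreal (cmod (f x) * sqrt (B x))" for x
  define b where "b x = ennreal (sqrt (A x))" for x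
  have [measurable]: "a \<in> borel_measurable \<mu>" "b \<in> borel_measurable \<mu>"
    unfolding a_def b_def by measurable
  have "ennreal (cmod (L2_inner \<mu> f g)) \<le> (\<integral>\<^sup>+x. ennreal (cmod (f x) * cmod (g x)) \<partial>\<mu>)"
  proof (cases "integrable \<mu> (\<lambda>x. f x * cnj (g x))")
    case True
    then show ?thesis
      using integral_norm_bound_ennreal unfolding L2_inner_def by (fastforce simp: norm_mult)
  qed (simp add: L2_inner_def not_integrable_integral_eq)
  also have "\<dots> \<le> (\<integral>\<^sup>+x. a x * b x \<partial>\<mu>)"
  proof (intro nn_integral_mono)
    fix x
    have "cmod (g x) \<le> sqrt (A x) * sqrt (B x)"
      using g[of x] by (simp add: real_le_rsqrt flip: real_sqrt_mult)
    then have "cmod (f x) * cmod (g x) \<le> cmod (f x) * (sqrt (A x) * sqrt (B x))"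
      by (rule mult_left_mono) simp
    then show "ennreal (cmod (f x) * cmod (g x)) \<le> a x * b x"
      unfolding a_def b_def using A[of x] B[of x] by (simp add: ennreal_leI mult_ac flip: ennreal_mult)
  qed
  finally have "ennreal ((cmod (L2_inner \<mu> f g))\<^sup>2) \<le> (\<integral>\<^sup>+x. a x * b x \<partial>\<mu>)\<^sup>2"
    by (subst ennreal_power[symmetric]) (simp_all add: power_mono)
  also have "\<dots> \<le> (\<integral>\<^sup>+x. a x ^ 2 \<partial>\<mu>) * (\<integral>\<^sup>+x. b x ^ 2 \<partial>\<mu>)"
    by (rule Cauchy_Schwarz_nn_integral) measurable
  also have "\<dots> = (\<integral>\<^sup>+x. ennreal ((cmod (f x))\<^sup>2 * B x) \<partial>\<mu>) * (\<integral>\<^sup>+x. ennreal (A x) \<partial>\<mu>)"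
    unfolding a_def b_def using A B by (simp add: ennreal_power power_mult_distrib)
  finally show ?thesis .
qed

lemma sum_cmod_L2_inner_square_le:
  fixes f :: "'a \<Rightarrow> complex" and g :: "'i \<Rightarrow> 'a \<Rightarrow> complex" and A B :: "'i \<Rightarrow> 'a \<Rightarrow> real"
  assumes f [measurable]: "f \<in> borel_measurable \<mu>"
    and A: "\<And>i. A i \<in> borel_measurable \<mu>" "\<And>i x. 0 \<le> A i x"
    and B: "\<And>i. B i \<in> borel_measurable \<mu>" "\<And>i x. 0 \<le> B i x"
    and g: "\<And>i x. (cmod (g i x))\<^sup>2 \<le> A i x * B i x"
    and column: "\<And>i. (\<integral>\<^sup>+x. ennreal (A i x) \<partial>\<mu>) \<le> C\<^sub>1"
    and row: "\<And>x. (\<Sum>i\<in>F. ennreal (B i x)) \<le> C\<^sub>2"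
  shows "(\<Sum>i\<in>F. ennreal ((cmod (L2_inner \<mu> f (g i)))\<^sup>2))
    \<le> C\<^sub>1 * C\<^sub>2 * (\<integral>\<^sup>+x. ennreal ((cmod (f x))\<^sup>2) \<partial>\<mu>)"
proof -
  have "(\<Sum>i\<in>F. ennreal ((cmod (L2_inner \<mu> f (g i)))\<^sup>2))
      \<le> (\<Sum>i\<in>F. (\<integral>\<^sup>+x. ennreal ((cmod (f x))\<^sup>2 * B i x) \<partial>\<mu>) * C\<^sub>1)"
  proof (rule sum_mono)
    fix i
    have "ennreal ((cmod (L2_inner \<mu> f (g i)))\<^sup>2)
        \<le> (\<integral>\<^sup>+x. ennreal ((cmod (f x))\<^sup>2 * B i x) \<partial>\<mu>) * (\<integral>\<^sup>+x. ennreal (A i x) \<partial>\<mu>)"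
      by (rule cmod_L2_inner_square_le[OF f A(1) B(1) A(2) B(2) g])
    also have "\<dots> \<le> (\<integral>\<^sup>+x. ennreal ((cmod (f x))\<^sup>2 * B i x) \<partial>\<mu>) * C\<^sub>1"
      by (intro mult_left_mono column) simp
    finally show "ennreal ((cmod (L2_inner \<mu> f (g i)))\<^sup>2)
        \<le> (\<integral>\<^sup>+x. ennreal ((cmod (f x))\<^sup>2 * B i x) \<partial>\<mu>) * C\<^sub>1" .
  qed
  also have "\<dots> = (\<integral>\<^sup>+x. ennreal ((cmod (f x))\<^sup>2) * (\<Sum>i\<in>F. ennreal (B i x)) \<partial>\<mu>) * C\<^sub>1"
    using f B by (simp add: nn_integral_sum sum_distrib_left sum_distrib_right ennreal_mult del: sum_ennreal)
  also have "\<dots> \<le> (\<integral>\<^sup>+x. ennreal ((cmod (f x))\<^sup>2) * C\<^sub>2 \<partial>\<mu>) * C\<^sub>1"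
    by (intro mult_right_mono nn_integral_mono mult_left_mono row) simp_all
  also have "\<dots> = C\<^sub>1 * C\<^sub>2 * (\<integral>\<^sup>+x. ennreal ((cmod (f x))\<^sup>2) \<partial>\<mu>)"
    by (subst nn_integral_multc) (measurable, simp add: mult_ac)
  finally show ?thesis .
qed

lemma nn_integral_cmod_square_eq_L2_norm:
  assumes "square_integrable \<mu> f"
  shows "(\<integral>\<^sup>+x. ennreal ((cmod (f x))\<^sup>2) \<partial>\<mu>) = ennreal ((L2_norm \<mu> f)\<^sup>2)"
  using assms unfolding square_integrable_def L2_norm_def
  by (simp add: nn_integral_eq_integral integral_nonneg_AE)

lemma summable_on_infsum_le_of_finite_sums:
  fixes a :: "'i \<Rightarrow> real"
  assumes nonneg: "\<And>i. 0 \<le> a i" and "0 \<le> c"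
    and finite_sums: "\<And>F. finite F \<Longrightarrow> (\<Sum>i\<in>F. ennreal (a i)) \<le> ennreal c"
  shows "a summable_on UNIV \<and> (\<Sum>\<^sub>\<infinity>i. a i) \<le> c"
proof -
  have bound: "sum a F \<le> c" if "finite F" for F
    using finite_sums[OF that] nonneg \<open>0 \<le> c\<close> by (simp add: ennreal_le_iff sum_nonneg)
  then have "a summable_on UNIV"
    using nonneg by (intro nonneg_bdd_above_summable_on bdd_aboveI) auto
  with bound show ?thesis
    using infsum_le_finite_sums by blast
qed

lemma lc_group_settingD:
  assumes "lc_group_setting \<mu> Q"
  shows "left_haar_measure \<mu>" "open Q" "0 \<in> Q" "uminus ` Q = Q" "compact (closure Q)"
  using assms unfolding lc_group_setting_def by blast+

lemma emeasure_left_haar_relcompact_open: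
  assumes haar: "left_haar_measure \<mu>" and "open Q" "Q \<noteq> {}" "compact (closure Q)"
  shows "0 < emeasure \<mu> Q" "emeasure \<mu> Q < \<infinity>"
proof -
  show "0 < emeasure \<mu> Q"
    by (rule emeasure_left_haar_open_pos[OF haar assms(2,3)])
  have "emeasure \<mu> Q \<le> emeasure \<mu> (closure Q)"
    by (intro emeasure_mono closure_subset) (simp add: sets_left_haar[OF haar])
  also have "\<dots> < \<infinity>"
    by (rule emeasure_left_haar_compact_finite[OF haar assms(4)])
  finally show "emeasure \<mu> Q < \<infinity>" .
qed

lemma nn_integral_translate_le_amalgam:
  fixes f :: "'g::{topological_group_add,t2_space} \<Rightarrow> 'b::real_normed_vector"
  assumes Q: "lc_group_setting \<mu> Q" and w: "\<And>x. 1 \<le> w x" and f: "wiener_amalgam \<mu> Q w f"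
  shows "(\<integral>\<^sup>+x. ennreal (norm (f (a + x))) \<partial>\<mu>) \<le> (\<integral>\<^sup>+x. amalgam_integrand \<mu> Q w f x \<partial>\<mu>)"
proof (rule nn_integral_translate_le)
  note setting = lc_group_settingD[OF Q]
  show "left_haar_measure \<mu>" "amalgam_integrand \<mu> Q w f \<in> borel_measurable \<mu>"
    using setting(1) f by (simp_all add: wiener_amalgam_iff_integrand)
  fix x
  have "x \<in> (+) x ` Q"
    using setting(3) by (rule rev_image_eqI) simp
  with setting(1-4) w f show "ennreal (norm (f x)) \<le> amalgam_integrand \<mu> Q w f x"
    by (intro norm_le_amalgam_integrand) (simp_all add: wiener_amalgam_iff_integrand)
qed

lemma sum_translates_le_amalgam:
  fixes f :: "'g::{topological_group_add,t2_space} \<Rightarrow> 'b::real_normed_vector" and lam :: "'i \<Rightarrow> 'g"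
  assumes Q: "lc_group_setting \<mu> Q" and w: "\<And>x. 1 \<le> w x" and f: "wiener_amalgam \<mu> Q w f"
    and fin: "\<And>u. finite {i. lam i \<in> (+) u ` Q}" and card: "\<And>u. card {i. lam i \<in> (+) u ` Q} \<le> N"
    and F: "finite F"
  shows "(\<Sum>i\<in>F. ennreal (norm (f (- x + lam i))))
    \<le> of_nat N * (\<integral>\<^sup>+u. amalgam_integrand \<mu> Q w f u \<partial>\<mu>) / emeasure \<mu> Q"
proof -
  note setting = lc_group_settingD[OF Q]
  have f': "continuous_on UNIV f" "amalgam_integrand \<mu> Q w f \<in> borel_measurable \<mu>"
    using f by (simp_all add: wiener_amalgam_iff_integrand)
  have shift: "{i. - x + lam i \<in> (+) u ` Q} = {i. lam i \<in> (+) (x + u) ` Q}" for u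
    unfolding image_add_left_eq_vimage by (simp add: minus_add add.assoc del: add_uminus_conv_diff)
  have "Q \<noteq> {}"
    using setting(3) by blast
  then have Q_measure: "emeasure \<mu> Q \<noteq> 0" "emeasure \<mu> Q \<noteq> top"
    using emeasure_left_haar_relcompact_open[OF setting(1,2) _ setting(5)] by auto
  have "emeasure \<mu> Q * (\<Sum>i\<in>F. ennreal (norm (f (- x + lam i))))
      \<le> of_nat N * (\<integral>\<^sup>+u. amalgam_integrand \<mu> Q w f u \<partial>\<mu>)"
    by (rule emeasure_mult_sum_le_nn_integral[OF setting(1,2,4) f'(2)
          norm_le_amalgam_integrand[OF setting(1-4) w f'(1)]]) (simp_all add: shift fin card F)
  then have "(\<Sum>i\<in>F. ennreal (norm (f (- x + lam i)))) * emeasure \<mu> Q / emeasure \<mu> Q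
      \<le> of_nat N * (\<integral>\<^sup>+u. amalgam_integrand \<mu> Q w f u \<partial>\<mu>) / emeasure \<mu> Q"
    by (simp add: mult.commute divide_right_mono_ennreal)
  then show ?thesis
    by (simp only: mult_divide_eq_ennreal[OF Q_measure])
qed

lemma molecule_sum_inner_square_le:
  fixes \<Phi> :: "'g::{topological_group_add,t2_space} \<Rightarrow> real" and lam :: "'i \<Rightarrow> 'g"
  assumes Q: "lc_group_setting \<mu> Q" and w: "\<And>x. 1 \<le> w x"
    and fin: "\<And>u. finite {i. lam i \<in> (+) u ` Q}" and card: "\<And>u. card {i. lam i \<in> (+) u ` Q} \<le> N"
    and \<Phi>: "\<And>x. 0 \<le> \<Phi> x" "wiener_amalgam \<mu> Q w \<Phi>"
    and g: "\<And>i x. cmod (g i x) \<le> min (\<Phi> (- lam i + x)) (\<Phi> (- x + lam i))"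
    and f: "f \<in> borel_measurable \<mu>" and F: "finite F"
  shows "(\<Sum>i\<in>F. ennreal ((cmod (L2_inner \<mu> f (g i)))\<^sup>2))
    \<le> (\<integral>\<^sup>+x. amalgam_integrand \<mu> Q w \<Phi> x \<partial>\<mu>)
        * (of_nat N * (\<integral>\<^sup>+x. amalgam_integrand \<mu> Q w \<Phi> x \<partial>\<mu>) / emeasure \<mu> Q)
        * (\<integral>\<^sup>+x. ennreal ((cmod (f x))\<^sup>2) \<partial>\<mu>)"
proof (rule sum_cmod_L2_inner_square_le[OF f])
  have norm_\<Phi>: "norm (\<Phi> y) = \<Phi> y" for y
    using \<Phi>(1) by simp
  show "(\<lambda>x. \<Phi> (- lam i + x)) \<in> borel_measurable \<mu>" "(\<lambda>x. \<Phi> (- x + lam i)) \<in> borel_measurable \<mu>" for i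
    using \<Phi>(2) unfolding wiener_amalgam_iff_integrand
      measurable_left_haar_source[OF lc_group_settingD(1)[OF Q]]
    by (auto intro!: borel_measurable_continuous_onI continuous_on_compose2[of UNIV \<Phi>] continuous_intros)
  show "(cmod (g i x))\<^sup>2 \<le> \<Phi> (- lam i + x) * \<Phi> (- x + lam i)" for i x
    using g[of i x] \<Phi>(1) by (auto simp: power2_eq_square intro!: mult_mono)
  show "(\<integral>\<^sup>+x. ennreal (\<Phi> (- lam i + x)) \<partial>\<mu>) \<le> (\<integral>\<^sup>+x. amalgam_integrand \<mu> Q w \<Phi> x \<partial>\<mu>)" for i
    using nn_integral_translate_le_amalgam[OF Q w \<Phi>(2)] unfolding norm_\<Phi> .
  show "(\<Sum>i\<in>F. ennreal (\<Phi> (- x + lam i)))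
      \<le> of_nat N * (\<integral>\<^sup>+x. amalgam_integrand \<mu> Q w \<Phi> x \<partial>\<mu>) / emeasure \<mu> Q" for x
    using sum_translates_le_amalgam[OF Q w \<Phi>(2) fin card F] unfolding norm_\<Phi> .
qed (use \<Phi>(1) in auto)

lemma molecules_sum_inner_square_bounded:
  fixes \<mu> :: "'g::{topological_group_add,t2_space} measure"
    and lam :: "'i \<Rightarrow> 'g" and g :: "'i \<Rightarrow> 'g \<Rightarrow> complex"
  assumes Q: "lc_group_setting \<mu> Q" and "rel_separated Q lam" and "admissible_weight w"
    and "molecules \<mu> Q w K lam g"
  obtains C where "C < \<infinity>" and "\<And>f F. square_integrable \<mu> f \<Longrightarrow> finite F \<Longrightarrow>
    (\<Sum>i\<in>F. ennreal ((cmod (L2_inner \<mu> f (g i)))\<^sup>2)) \<le> C * ennreal ((L2_norm \<mu> f)\<^sup>2)"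
proof -
  obtain N where fin: "\<And>u. finite {i. lam i \<in> (+) u ` Q}"
    and card: "\<And>u. card {i. lam i \<in> (+) u ` Q} \<le> N"
    using assms(2) unfolding rel_separated_def by blast
  obtain \<Phi> where \<Phi>: "\<And>x. 0 \<le> \<Phi> x" "wiener_amalgam \<mu> Q w \<Phi>"
    and g: "\<And>i x. cmod (g i x) \<le> min (\<Phi> (- lam i + x)) (\<Phi> (- x + lam i))"
    using assms(4) unfolding molecules_def by blast
  have w: "\<And>x. 1 \<le> w x"
    using assms(3) unfolding admissible_weight_def by blast
  define I where "I = (\<integral>\<^sup>+x. amalgam_integrand \<mu> Q w \<Phi> x \<partial>\<mu>)"
  have "I < \<infinity>"
    using \<Phi>(2) by (simp add: I_def wiener_amalgam_iff_integrand)
  moreover have "0 < emeasure \<mu> Q"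
    using lc_group_settingD[OF Q] by (intro emeasure_left_haar_relcompact_open) auto
  ultimately have "I * (of_nat N * I / emeasure \<mu> Q) < \<infinity>"
    by (metis ennreal_divide_eq_top_iff ennreal_mult_less_top ennreal_top_neq_of_nat
        ennreal_zero_less_divide infinity_ennreal_def not_gr_zero)
  then show ?thesis
  proof (rule that)
    fix f and F :: "'i set" assume f: "square_integrable \<mu> f" and "finite F"
    then show "(\<Sum>i\<in>F. ennreal ((cmod (L2_inner \<mu> f (g i)))\<^sup>2))
        \<le> I * (of_nat N * I / emeasure \<mu> Q) * ennreal ((L2_norm \<mu> f)\<^sup>2)"
      unfolding I_def nn_integral_cmod_square_eq_L2_norm[OF f, symmetric]
      by (intro molecule_sum_inner_square_le[OF Q w fin card \<Phi> g]) (simp_all add: square_integrable_def)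
  qed
qed

theorem lemma4p8:
  fixes \<mu> :: "'g::{topological_group_add,t2_space} measure"
    and Q :: "'g set" and w :: "'g \<Rightarrow> real"
    and K :: "('g \<Rightarrow> complex) set"
    and lam :: "'i \<Rightarrow> 'g" and g :: "'i \<Rightarrow> 'g \<Rightarrow> complex"
  assumes "lc_group_setting \<mu> Q"
    and "rkhs \<mu> K"
    and "rel_separated Q lam"
    and "admissible_weight w"
    and "molecules \<mu> Q w K lam g"
  shows "\<exists>B>0. \<forall>f\<in>K. (\<lambda>i. (cmod (L2_inner \<mu> f (g i)))\<^sup>2) summable_on UNIV \<and>
           (\<Sum>\<^sub>\<infinity>i. (cmod (L2_inner \<mu> f (g i)))\<^sup>2) \<le> B * (L2_norm \<mu> f)\<^sup>2"
proof -
  obtain C where "C < \<infinity>" and finite_sums: "\<And>f F. square_integrable \<mu> f \<Longrightarrow> finite F \<Longrightarrow>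
      (\<Sum>i\<in>F. ennreal ((cmod (L2_inner \<mu> f (g i)))\<^sup>2)) \<le> C * ennreal ((L2_norm \<mu> f)\<^sup>2)"
    using molecules_sum_inner_square_bounded[OF assms(1,3,4,5)] by blast
  define B where "B = enn2real C + 1"
  have "0 < B"
    using enn2real_nonneg[of C] unfolding B_def by linarith
  have "C \<le> ennreal B"
    using \<open>C < \<infinity>\<close> by (simp add: B_def)
  show ?thesis
  proof (intro exI[of _ B] conjI[OF \<open>0 < B\<close>] ballI summable_on_infsum_le_of_finite_sums)
    fix f and F :: "'i set" assume "f \<in> K" and "finite F"
    then have "square_integrable \<mu> f"
      using assms(2) unfolding rkhs_def by blast
    with \<open>finite F\<close> \<open>C \<le> ennreal B\<close>
    have "(\<Sum>i\<in>F. ennreal ((cmod (L2_inner \<mu> f (g i)))\<^sup>2)) \<le> ennreal B * ennreal ((L2_norm \<mu> f)\<^sup>2)"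
      by (intro order_trans[OF finite_sums] mult_right_mono) simp_all
    then show "(\<Sum>i\<in>F. ennreal ((cmod (L2_inner \<mu> f (g i)))\<^sup>2)) \<le> ennreal (B * (L2_norm \<mu> f)\<^sup>2)"
      using \<open>0 < B\<close> by (simp add: ennreal_mult)
  qed (use \<open>0 < B\<close> in auto)
qed

end
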